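(* Let $A,B,C$ be non-empty sets, $I$ a non-empty index set, $\{V_i\}_{i\in I}\subseteq\mathcal R(A)$, $\{W_i\}_{i\in I}\subseteq\mathcal R(B)$, $\{X_i\}_{i\in I}\subseteq\mathcal R(C)$, $Z\in\mathcal R(A,B)$ and $Y\in\mathcal R(B,C)$. If $R\in\mathcal R(A,B)$ is a solution to $WL^{2\text{-}3}(A,B,I,V_i,W_i,Z)$ and $S\in\mathcal R(B,C)$ is a solution to $WL^{2\text{-}3}(B,C,I,W_i,X_i,Y)$, then $R\circ S$ is a solution to $WL^{2\text{-}3}(A,C,I,V_i,X_i,Z\circ Y)$.
   Context: $\mathcal L=(L,\wedge,\vee,\otimes,\to,0,1)$ is a complete residuated lattice. For non-empty sets $X,Y$, $\mathcal R(X,Y)$ is the set of fuzzy relations $X\times Y\to L$, $\mathcal R(X)=\mathcal R(X,X)$, ordered pointwise; $R^{-1}(y,x)=R(x,y)$; $(R\circ S)(x,t)=\bigvee_{y}R(x,y)\otimes S(y,t)$. For non-empty sets $P,Q$, index set $I$, $\{V_i\}\subseteq\mathcal R(P)$, $\{W_i\}\subseteq\mathcal R(Q)$, $Z\in\mathcal R(P,Q)$, the system $WL^{2\text{-}3}(P,Q,I,V_i,W_i,Z)$ in the unknown $U\in\mathcal R(P,Q)$ consists of $U^{-1}\circ V_i\le W_i\circ U^{-1}$ and $U\circ W_i\le V_i\circ U$ for all $i\in I$, together with $U\le Z$. *)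

theory Defs
  imports Main
begin

class complete_residuated_lattice = complete_lattice +
  fixes tensor :: "'a \<Rightarrow> 'a \<Rightarrow> 'a" (infixl "\<otimes>" 70)
    and resid :: "'a \<Rightarrow> 'a \<Rightarrow> 'a" (infixr "\<rightarrow>\<^sub>r" 60)
  assumes tensor_assoc: "(x \<otimes> y) \<otimes> z = x \<otimes> (y \<otimes> z)"
    and tensor_commute: "x \<otimes> y = y \<otimes> x"
    and tensor_top: "x \<otimes> top = x"
    and residuation: "x \<otimes> y \<le> z \<longleftrightarrow> x \<le> y \<rightarrow>\<^sub>r z"

type_synonym ('x, 'y, 'l) frel = "'x \<Rightarrow> 'y \<Rightarrow> 'l"

definition conv :: "('x, 'y, 'l) frel \<Rightarrow> ('y, 'x, 'l) frel" where
  "conv R = (\<lambda>y x. R x y)"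

definition rcomp :: "('x, 'y, 'l::complete_residuated_lattice) frel \<Rightarrow> ('y, 't, 'l) frel \<Rightarrow> ('x, 't, 'l) frel"
  (infixl "\<circ>\<^sub>f" 75) where
  "rcomp R S = (\<lambda>x t. SUP y. R x y \<otimes> S y t)"

definition WL23_solution ::
  "'i set \<Rightarrow> ('i \<Rightarrow> ('p, 'p, 'l::complete_residuated_lattice) frel) \<Rightarrow> ('i \<Rightarrow> ('q, 'q, 'l) frel)
    \<Rightarrow> ('p, 'q, 'l) frel \<Rightarrow> ('p, 'q, 'l) frel \<Rightarrow> bool" where
  "WL23_solution I V W Z U \<longleftrightarrow>
     (\<forall>i\<in>I. conv U \<circ>\<^sub>f V i \<le> W i \<circ>\<^sub>f conv U \<and> U \<circ>\<^sub>f W i \<le> V i \<circ>\<^sub>f U) \<and> U \<le> Z"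

end

theory Submission
  imports Defs
begin

text \<open>Both conditions of the system say that the solution intertwines the two families:
  \<open>U \<circ>\<^sub>f W i \<le> V i \<circ>\<^sub>f U\<close>, and likewise for \<open>conv U\<close> with the roles of
  \<open>V\<close> and \<open>W\<close> exchanged. Intertwining relations compose, by associativity and monotonicity of
  composition, and \<open>conv (R \<circ>\<^sub>f S) = conv S \<circ>\<^sub>f conv R\<close> reduces the converse condition to the
  same fact. Associativity rests on the tensor distributing over arbitrary suprema, which is
  where residuation enters.\<close>

context complete_residuated_lattice
begin

lemma tensor_mono_left: "a \<le> b \<Longrightarrow> a \<otimes> c \<le> b \<otimes> c"
  using residuation order_trans by blast

lemma tensor_mono: "a \<le> b \<Longrightarrow> c \<le> d \<Longrightarrow> a \<otimes> c \<le> b \<otimes> d"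
  by (metis tensor_mono_left tensor_commute order_trans)

lemma tensor_SUP_distrib_right: "(SUP y. f y) \<otimes> c = (SUP y. f y \<otimes> c)"
proof (rule order.antisym)
  have "(SUP y. f y) \<le> c \<rightarrow>\<^sub>r (SUP y. f y \<otimes> c)"
    by (rule SUP_least) (metis residuation SUP_upper UNIV_I)
  then show "(SUP y. f y) \<otimes> c \<le> (SUP y. f y \<otimes> c)"
    using residuation by blast
  show "(SUP y. f y \<otimes> c) \<le> (SUP y. f y) \<otimes> c"
    by (rule SUP_least, rule tensor_mono_left) (rule SUP_upper, simp)
qed

lemma tensor_SUP_distrib_left: "c \<otimes> (SUP y. f y) = (SUP y. c \<otimes> f y)"
  using tensor_SUP_distrib_right[of f c] by (simp add: tensor_commute)

end

lemma rcomp_assoc: "(R \<circ>\<^sub>f S) \<circ>\<^sub>f T = R \<circ>\<^sub>f (S \<circ>\<^sub>f T)"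
proof (intro ext)
  fix x t
  have "((R \<circ>\<^sub>f S) \<circ>\<^sub>f T) x t = (SUP z. SUP y. R x y \<otimes> S y z \<otimes> T z t)"
    by (simp add: rcomp_def tensor_SUP_distrib_right)
  also have "\<dots> = (SUP y. SUP z. R x y \<otimes> S y z \<otimes> T z t)"
    by (rule SUP_commute)
  also have "\<dots> = (R \<circ>\<^sub>f (S \<circ>\<^sub>f T)) x t"
    by (simp add: rcomp_def tensor_SUP_distrib_left tensor_assoc)
  finally show "((R \<circ>\<^sub>f S) \<circ>\<^sub>f T) x t = (R \<circ>\<^sub>f (S \<circ>\<^sub>f T)) x t" .
qed

lemma conv_rcomp: "conv (R \<circ>\<^sub>f S) = conv S \<circ>\<^sub>f conv R"
  unfolding conv_def rcomp_def by (simp add: tensor_commute)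

lemma rcomp_mono: "R \<le> R' \<Longrightarrow> S \<le> S' \<Longrightarrow> R \<circ>\<^sub>f S \<le> R' \<circ>\<^sub>f S'"
  unfolding rcomp_def le_fun_def by (intro allI SUP_mono) (blast intro: tensor_mono)

lemma rcomp_intertwining:
  assumes R: "R \<circ>\<^sub>f W \<le> V \<circ>\<^sub>f R" and S: "S \<circ>\<^sub>f X \<le> W \<circ>\<^sub>f S"
  shows "(R \<circ>\<^sub>f S) \<circ>\<^sub>f X \<le> V \<circ>\<^sub>f (R \<circ>\<^sub>f S)"
proof -
  have "(R \<circ>\<^sub>f S) \<circ>\<^sub>f X = R \<circ>\<^sub>f (S \<circ>\<^sub>f X)" by (rule rcomp_assoc)
  also have "\<dots> \<le> R \<circ>\<^sub>f (W \<circ>\<^sub>f S)" using S by (rule rcomp_mono[OF order_refl])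
  also have "\<dots> = (R \<circ>\<^sub>f W) \<circ>\<^sub>f S" by (rule rcomp_assoc[symmetric])
  also have "\<dots> \<le> (V \<circ>\<^sub>f R) \<circ>\<^sub>f S" using R by (rule rcomp_mono[OF _ order_refl])
  also have "\<dots> = V \<circ>\<^sub>f (R \<circ>\<^sub>f S)" by (rule rcomp_assoc)
  finally show ?thesis .
qed

theorem proposition4p3:
  fixes I :: "'i set"
    and V :: "'i \<Rightarrow> ('a, 'a, 'l::complete_residuated_lattice) frel"
    and W :: "'i \<Rightarrow> ('b, 'b, 'l) frel"
    and X :: "'i \<Rightarrow> ('c, 'c, 'l) frel"
    and Z R :: "('a, 'b, 'l) frel"
    and Y S :: "('b, 'c, 'l) frel"
  assumes "I \<noteq> {}"
    and R: "WL23_solution I V W Z R"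
    and S: "WL23_solution I W X Y S"
  shows "WL23_solution I V X (Z \<circ>\<^sub>f Y) (R \<circ>\<^sub>f S)"
  unfolding WL23_solution_def
proof (intro conjI ballI)
  fix i assume "i \<in> I"
  then have "conv R \<circ>\<^sub>f V i \<le> W i \<circ>\<^sub>f conv R" "R \<circ>\<^sub>f W i \<le> V i \<circ>\<^sub>f R"
    and "conv S \<circ>\<^sub>f W i \<le> X i \<circ>\<^sub>f conv S" "S \<circ>\<^sub>f X i \<le> W i \<circ>\<^sub>f S"
    using R S unfolding WL23_solution_def by auto
  then show "conv (R \<circ>\<^sub>f S) \<circ>\<^sub>f V i \<le> X i \<circ>\<^sub>f conv (R \<circ>\<^sub>f S)"
    and "R \<circ>\<^sub>f S \<circ>\<^sub>f X i \<le> V i \<circ>\<^sub>f (R \<circ>\<^sub>f S)"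
    by (simp_all add: conv_rcomp rcomp_intertwining)
next
  show "R \<circ>\<^sub>f S \<le> Z \<circ>\<^sub>f Y"
    using R S unfolding WL23_solution_def by (blast intro: rcomp_mono)
qed

end
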